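(* Let $f$ be a homeomorphism of a compact, connected, separable metric space $\mathcal M$, and assume that $\mathcal M$ itself is not a chain-transitive set for $f$. Let $C$ be a reversible core of $f$. Then there exist an infinite sequence of pairwise distinct dissipative attractors $A_1,A_2,\dots$ of $f$ and an infinite sequence of pairwise distinct dissipative repellers $R_1,R_2,\dots$ of $f$ which accumulate on $C$: there are $\delta_k\to 0$ such that $A_k$ and $R_k$ lie in the $\delta_k$-neighbourhood of $C$ for every $k$ (so all limit points of these sequences lie in $C$).
   Context: An $\varepsilon$-orbit of $f$ is a finite sequence $x_1,\dots,x_N$ with $\mathrm{dist}(f(x_j),x_{j+1})<\varepsilon$ for $j=1,\dots,N-1$; it connects $x_1$ to $x_N$. A closed invariant set $\Lambda$ is chain-transitive if for every $\varepsilon>0$ and all $x,y\in\Lambda$ there is an $\varepsilon$-orbit lying in $\Lambda$ connecting $x$ to $y$. A closed invariant set $A$ is stable if for every $\delta>0$ there is $\varepsilon>0$ such that no $\varepsilon$-orbit starting in $A$ leaves the $\delta$-neighbourhood of $A$. A CRH-attractor (Conley–Ruelle–Hurley attractor) of $f$ is a closed invariant set that is chain-transitive and stable; a CRH-repeller of $f$ is a CRH-attractor of $f^{-1}$. A CRH-attractor $A$ is a dissipative attractor if there exists a point $x\notin A$ such that for every $\varepsilon>0$ some $\varepsilon$-orbit connects $x$ to a point of $A$; otherwise $A$ is called a reversible core. A dissipative repeller is a dissipative attractor of $f^{-1}$. *)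

theory Defs
  imports "HOL-Analysis.Analysis"
begin

definition eps_orbit :: "('a::metric_space \<Rightarrow> 'a) \<Rightarrow> real \<Rightarrow> 'a list \<Rightarrow> bool" where
  "eps_orbit h \<epsilon> xs \<longleftrightarrow> xs \<noteq> [] \<and>
     (\<forall>j. Suc j < length xs \<longrightarrow> dist (h (xs ! j)) (xs ! Suc j) < \<epsilon>)"

definition nbhd :: "'a::metric_space set \<Rightarrow> real \<Rightarrow> 'a set" where
  "nbhd A \<delta> = {y. \<exists>a\<in>A. dist y a < \<delta>}"

definition invariant_set :: "'a set \<Rightarrow> ('a \<Rightarrow> 'a) \<Rightarrow> 'a set \<Rightarrow> bool" where
  "invariant_set M h S \<longleftrightarrow> S \<subseteq> M \<and> h ` S = S"

definition chain_transitive :: "'a::metric_space set \<Rightarrow> ('a \<Rightarrow> 'a) \<Rightarrow> 'a set \<Rightarrow> bool" where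
  "chain_transitive M h L \<longleftrightarrow> closed L \<and> invariant_set M h L \<and>
     (\<forall>\<epsilon>>0. \<forall>x\<in>L. \<forall>y\<in>L. \<exists>xs. eps_orbit h \<epsilon> xs \<and> set xs \<subseteq> L \<and> hd xs = x \<and> last xs = y)"

definition stable_set :: "'a::metric_space set \<Rightarrow> ('a \<Rightarrow> 'a) \<Rightarrow> 'a set \<Rightarrow> bool" where
  "stable_set M h A \<longleftrightarrow> closed A \<and> invariant_set M h A \<and>
     (\<forall>\<delta>>0. \<exists>\<epsilon>>0. \<forall>xs. eps_orbit h \<epsilon> xs \<and> set xs \<subseteq> M \<and> hd xs \<in> A \<longrightarrow> set xs \<subseteq> nbhd A \<delta>)"

text \<open>CRH-attractors are taken nonempty (standard convention).\<close>
definition crh_attractor :: "'a::metric_space set \<Rightarrow> ('a \<Rightarrow> 'a) \<Rightarrow> 'a set \<Rightarrow> bool" where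
  "crh_attractor M h A \<longleftrightarrow> A \<noteq> {} \<and> chain_transitive M h A \<and> stable_set M h A"

definition dissipative_attractor :: "'a::metric_space set \<Rightarrow> ('a \<Rightarrow> 'a) \<Rightarrow> 'a set \<Rightarrow> bool" where
  "dissipative_attractor M h A \<longleftrightarrow> crh_attractor M h A \<and>
     (\<exists>x\<in>M - A. \<forall>\<epsilon>>0. \<exists>xs. eps_orbit h \<epsilon> xs \<and> set xs \<subseteq> M \<and> hd xs = x \<and> last xs \<in> A)"

definition reversible_core :: "'a::metric_space set \<Rightarrow> ('a \<Rightarrow> 'a) \<Rightarrow> 'a set \<Rightarrow> bool" where
  "reversible_core M h A \<longleftrightarrow> crh_attractor M h A \<and> \<not> dissipative_attractor M h A"

text \<open>Repellers of h are attractors of the inverse map; these are stated with the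
  inverse g of the homeomorphism directly.\<close>

end

theory Submission
  imports Defs
begin

text \<open>
  For a point p let \<open>\<Omega>(p)\<close> be the set of points reached from p, for every \<open>\<epsilon> > 0\<close>, by
  \<open>\<epsilon>\<close>-chains of at least one step. It is closed, forward invariant and stable, and by
  compactness and Zorn's lemma it contains a minimal set with these three properties; such a
  minimal set is a CRH-attractor. Since M is connected and \<open>C \<noteq> M\<close>, arbitrarily close to C
  there are points \<open>p \<notin> C\<close> that are not chain recurrent: otherwise the \<open>\<epsilon>\<close>-chain class of a
  point of C would be a nonempty proper clopen subset of M. Stability of C keeps \<open>\<Omega>(p)\<close> close
  to C, and an attractor inside \<open>\<Omega>(p)\<close> is dissipative (p reaches it but does not lie in it)
  and disjoint from C (no point outside the reversible core C chain-reaches C). Reversing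
  chains shows that C is a reversible core of the inverse map as well, which yields the
  repellers. The attractors become pairwise distinct by choosing each one strictly closer to C
  than the previous one.
\<close>

section \<open>Epsilon-chains\<close>

inductive eps_chain :: "'a::metric_space set \<Rightarrow> ('a \<Rightarrow> 'a) \<Rightarrow> real \<Rightarrow> 'a \<Rightarrow> 'a \<Rightarrow> bool"
  for S h e where
  base: "x \<in> S \<Longrightarrow> eps_chain S h e x x"
| step: "eps_chain S h e x y \<Longrightarrow> z \<in> S \<Longrightarrow> dist (h y) z < e \<Longrightarrow> eps_chain S h e x z"

definition eps_chain_plus :: "'a::metric_space set \<Rightarrow> ('a \<Rightarrow> 'a) \<Rightarrow> real \<Rightarrow> 'a \<Rightarrow> 'a \<Rightarrow> bool" where
  "eps_chain_plus S h e x y \<longleftrightarrow> y \<in> S \<and> (\<exists>z. eps_chain S h e x z \<and> dist (h z) y < e)"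

definition chain_limit_set :: "'a::metric_space set \<Rightarrow> ('a \<Rightarrow> 'a) \<Rightarrow> 'a \<Rightarrow> 'a set" where
  "chain_limit_set S h x = {y. \<forall>e>0. eps_chain_plus S h e x y}"

definition chain_recurrent :: "'a::metric_space set \<Rightarrow> ('a \<Rightarrow> 'a) \<Rightarrow> 'a \<Rightarrow> bool" where
  "chain_recurrent S h x \<longleftrightarrow> x \<in> chain_limit_set S h x"

definition chain_reaches :: "'a::metric_space set \<Rightarrow> ('a \<Rightarrow> 'a) \<Rightarrow> 'a \<Rightarrow> 'a set \<Rightarrow> bool" where
  "chain_reaches S h x A \<longleftrightarrow> (\<forall>e>0. \<exists>a\<in>A. eps_chain S h e x a)"

definition forward_stable :: "'a::metric_space set \<Rightarrow> ('a \<Rightarrow> 'a) \<Rightarrow> 'a set \<Rightarrow> bool" where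
  "forward_stable M h S \<longleftrightarrow> closed S \<and> S \<noteq> {} \<and> S \<subseteq> M \<and> h ` S \<subseteq> S \<and>
     (\<forall>\<delta>>0. \<exists>e>0. \<forall>x\<in>S. \<forall>y. eps_chain M h e x y \<longrightarrow> y \<in> nbhd S \<delta>)"

definition chain_class :: "'a::metric_space set \<Rightarrow> ('a \<Rightarrow> 'a) \<Rightarrow> real \<Rightarrow> 'a \<Rightarrow> 'a set" where
  "chain_class M h e c = {q \<in> M. eps_chain M h e c q \<and> eps_chain M h e q c}"

lemma eps_chain_in: "eps_chain S h e x y \<Longrightarrow> x \<in> S \<and> y \<in> S"
  by (induction rule: eps_chain.induct) auto

lemma eps_chain_trans:
  assumes "eps_chain S h e x y" and "eps_chain S h e y z"
  shows "eps_chain S h e x z"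
  using assms(2,1) by (induction rule: eps_chain.induct) (auto intro: eps_chain.step)

lemma eps_chain_mono: "eps_chain S h e x y \<Longrightarrow> e \<le> e' \<Longrightarrow> S \<subseteq> S' \<Longrightarrow> eps_chain S' h e' x y"
  by (induction rule: eps_chain.induct) (auto intro: eps_chain.intros)

lemma eps_chain_cons:
  assumes "x \<in> S" "dist (h x) y < e" "eps_chain S h e y z"
  shows "eps_chain S h e x z"
proof -
  have "eps_chain S h e x y"
    using assms eps_chain_in by (blast intro: eps_chain.intros)
  then show ?thesis using assms(3) by (rule eps_chain_trans)
qed

lemma eps_chain_plus_imp_eps_chain: "eps_chain_plus S h e x y \<Longrightarrow> eps_chain S h e x y"
  unfolding eps_chain_plus_def by (auto intro: eps_chain.step)

lemma eps_chain_plus_mono: "eps_chain_plus S h e x y \<Longrightarrow> e \<le> e' \<Longrightarrow> eps_chain_plus S h e' x y"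
  unfolding eps_chain_plus_def using eps_chain_mono by fastforce

lemma eps_chain_plus_trans:
  assumes "eps_chain_plus S h e x y" and "eps_chain S h e y z"
  shows "eps_chain_plus S h e x z"
  using assms(2,1)
proof (induction rule: eps_chain.induct)
  case (step u w v)
  then have "eps_chain S h e x w" by (simp add: eps_chain_plus_imp_eps_chain)
  with step.hyps show ?case unfolding eps_chain_plus_def by blast
qed simp

lemma eps_chain_plus_cons:
  assumes "x' \<in> S" "dist (h x') x < e" "eps_chain S h e x y"
  shows "eps_chain_plus S h e x' y"
proof -
  have "eps_chain_plus S h e x' x"
    using assms eps_chain_in unfolding eps_chain_plus_def by (blast intro: eps_chain.base)
  then show ?thesis using assms(3) by (rule eps_chain_plus_trans)
qed

lemma eps_chain_plus_perturb_start:
  assumes "eps_chain S h e x z" "x' \<in> S" "dist (h x') (h x) < \<theta>" "y \<in> S" "dist (h z) y < e"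
  shows "eps_chain_plus S h (e + \<theta>) x' y"
  using assms
proof (induction arbitrary: y rule: eps_chain.induct)
  case (base x y)
  then have "dist (h x') y < e + \<theta>"
    using dist_triangle[of "h x'" y "h x"] by (simp add: dist_commute)
  then show ?case using base unfolding eps_chain_plus_def by (auto intro: eps_chain.base)
next
  case (step x w z y)
  then have "eps_chain S h (e + \<theta>) x' z" by (auto intro: eps_chain_plus_imp_eps_chain)
  moreover have "dist (h z) y < e + \<theta>"
    using step.prems zero_le_dist[of "h x'" "h x"] by linarith
  ultimately show ?case using step.prems unfolding eps_chain_plus_def by blast
qed

lemma eps_chain_plus_closure:
  assumes "e > 0" "y \<in> S" "y \<in> closure {y. eps_chain_plus S h e x y}"
  shows "eps_chain_plus S h (2 * e) x y"
proof -
  obtain y' where y': "eps_chain_plus S h e x y'" "dist y' y < e"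
    using assms(1,3) closure_approachable by blast
  then obtain z where z: "eps_chain S h e x z" "dist (h z) y' < e"
    unfolding eps_chain_plus_def by auto
  have "dist (h z) y < 2 * e"
    using z y' dist_triangle[of "h z" y y'] by linarith
  then show ?thesis
    using assms(1,2) z eps_chain_mono[OF z(1), of "2 * e" S] unfolding eps_chain_plus_def by auto
qed

lemma eps_orbit_snoc:
  assumes "eps_orbit h e xs" "dist (h (last xs)) z < e"
  shows "eps_orbit h e (xs @ [z])"
  unfolding eps_orbit_def
proof (intro conjI allI impI)
  fix j assume "Suc j < length (xs @ [z])"
  then consider "Suc j < length xs" | "Suc j = length xs" by fastforce
  then show "dist (h ((xs @ [z]) ! j)) ((xs @ [z]) ! Suc j) < e"
  proof cases
    case 1
    then show ?thesis using assms(1) by (auto simp: eps_orbit_def nth_append)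
  next
    case 2
    then have "xs \<noteq> []" "j = length xs - 1" by auto
    then show ?thesis using 2 assms(2) by (auto simp: nth_append last_conv_nth)
  qed
qed simp

lemma eps_chain_imp_eps_orbit:
  "eps_chain S h e x y \<Longrightarrow> \<exists>xs. eps_orbit h e xs \<and> set xs \<subseteq> S \<and> hd xs = x \<and> last xs = y"
proof (induction rule: eps_chain.induct)
  case (base x)
  then show ?case by (intro exI[of _ "[x]"]) (auto simp: eps_orbit_def)
next
  case (step x y z)
  then obtain xs where xs: "eps_orbit h e xs" "set xs \<subseteq> S" "hd xs = x" "last xs = y" by blast
  then have "xs \<noteq> []" by (simp add: eps_orbit_def)
  with xs step show ?case by (intro exI[of _ "xs @ [z]"]) (auto intro: eps_orbit_snoc)
qed

lemma eps_orbit_imp_eps_chain: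
  assumes "eps_orbit h e xs" "set xs \<subseteq> S" "y \<in> set xs"
  shows "eps_chain S h e (hd xs) y"
proof -
  have "eps_chain S h e (hd xs) (xs ! i)" if "i < length xs" for i
    using that
  proof (induction i)
    case 0
    then show ?case using assms(2) by (auto simp: hd_conv_nth intro!: eps_chain.base)
  next
    case (Suc i)
    then have "eps_chain S h e (hd xs) (xs ! i)" by simp
    moreover have "xs ! Suc i \<in> S" using Suc.prems assms(2) by auto
    moreover have "dist (h (xs ! i)) (xs ! Suc i) < e"
      using Suc.prems assms(1) unfolding eps_orbit_def by blast
    ultimately show ?case by (rule eps_chain.step)
  qed
  then show ?thesis using assms(3) by (metis in_set_conv_nth)
qed

lemma eps_chain_iff_eps_orbit:
  "eps_chain S h e x y \<longleftrightarrow> (\<exists>xs. eps_orbit h e xs \<and> set xs \<subseteq> S \<and> hd xs = x \<and> last xs = y)"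
  using eps_chain_imp_eps_orbit eps_orbit_imp_eps_chain
  by (metis eps_orbit_def last_in_set)

lemma chain_transitive_iff:
  "chain_transitive M h L \<longleftrightarrow> closed L \<and> invariant_set M h L \<and>
     (\<forall>e>0. \<forall>x\<in>L. \<forall>y\<in>L. eps_chain L h e x y)"
  unfolding chain_transitive_def eps_chain_iff_eps_orbit by simp

lemma stable_set_iff:
  "stable_set M h A \<longleftrightarrow> closed A \<and> invariant_set M h A \<and>
     (\<forall>\<delta>>0. \<exists>e>0. \<forall>x\<in>A. \<forall>y. eps_chain M h e x y \<longrightarrow> y \<in> nbhd A \<delta>)"
proof -
  have "(\<forall>xs. eps_orbit h e xs \<and> set xs \<subseteq> M \<and> hd xs \<in> A \<longrightarrow> set xs \<subseteq> nbhd A \<delta>) \<longleftrightarrow>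
        (\<forall>x\<in>A. \<forall>y. eps_chain M h e x y \<longrightarrow> y \<in> nbhd A \<delta>)" (is "?orbits \<longleftrightarrow> ?chains")
    for e \<delta>
  proof
    assume ?orbits
    show ?chains
    proof (intro ballI allI impI)
      fix x y assume "x \<in> A" "eps_chain M h e x y"
      then obtain xs where "eps_orbit h e xs" "set xs \<subseteq> M" "hd xs = x" "last xs = y"
        using eps_chain_imp_eps_orbit by blast
      with \<open>?orbits\<close> \<open>x \<in> A\<close> show "y \<in> nbhd A \<delta>"
        by (metis eps_orbit_def last_in_set subsetD)
    qed
  qed (blast dest: eps_orbit_imp_eps_chain)
  then show ?thesis unfolding stable_set_def by simp
qed

lemma chain_reaches_iff_eps_orbit:
  "chain_reaches M h x A \<longleftrightarrow>
     (\<forall>e>0. \<exists>xs. eps_orbit h e xs \<and> set xs \<subseteq> M \<and> hd xs = x \<and> last xs \<in> A)"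
  unfolding chain_reaches_def eps_chain_iff_eps_orbit by fast

lemma dissipative_attractor_iff:
  "dissipative_attractor M h A \<longleftrightarrow> crh_attractor M h A \<and> (\<exists>x\<in>M - A. chain_reaches M h x A)"
  unfolding dissipative_attractor_def chain_reaches_iff_eps_orbit ..

section \<open>Neighbourhoods and compactness\<close>

lemma open_nbhd: "open (nbhd A \<delta>)"
proof -
  have "nbhd A \<delta> = (\<Union>a\<in>A. ball a \<delta>)" unfolding nbhd_def by (auto simp: dist_commute)
  then show ?thesis by auto
qed

lemma nbhd_mono: "\<delta> \<le> \<delta>' \<Longrightarrow> nbhd A \<delta> \<subseteq> nbhd A \<delta>'"
  unfolding nbhd_def by force

lemma subset_nbhd: "\<delta> > 0 \<Longrightarrow> A \<subseteq> nbhd A \<delta>"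
  unfolding nbhd_def by force

lemma nbhd_subset_nbhd:
  assumes "S \<subseteq> nbhd A r"
  shows "nbhd S s \<subseteq> nbhd A (r + s)"
proof
  fix y assume "y \<in> nbhd S s"
  then obtain x where x: "x \<in> S" "dist y x < s" unfolding nbhd_def by blast
  then obtain a where a: "a \<in> A" "dist x a < r" using assms unfolding nbhd_def by blast
  then have "dist y a < r + s" using x dist_triangle[of y a x] by linarith
  then show "y \<in> nbhd A (r + s)" using a unfolding nbhd_def by blast
qed

lemma closure_subset_nbhd:
  assumes "S \<subseteq> nbhd A r" "r < s"
  shows "closure S \<subseteq> nbhd A s"
proof
  fix y assume "y \<in> closure S"
  then obtain x where "x \<in> S" "dist x y < s - r"
    using assms(2) unfolding closure_approachable by (meson diff_gt_0_iff_gt)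
  then have "y \<in> nbhd S (s - r)" unfolding nbhd_def by (auto simp: dist_commute)
  then show "y \<in> nbhd A s" using nbhd_subset_nbhd[OF assms(1), of "s - r"] by auto
qed

lemma in_closure_if_in_all_nbhd:
  assumes "\<And>\<delta>. \<delta> > 0 \<Longrightarrow> y \<in> nbhd A \<delta>"
  shows "y \<in> closure A"
  unfolding closure_approachable
proof (intro allI impI)
  fix \<delta> :: real assume "\<delta> > 0"
  then obtain a where "a \<in> A" "dist y a < \<delta>" using assms unfolding nbhd_def by blast
  then show "\<exists>a\<in>A. dist a y < \<delta>" by (auto simp: dist_commute)
qed

lemma compact_directed_Inter_subset_open:
  assumes "compact K" "F \<noteq> {}" "\<And>X. X \<in> F \<Longrightarrow> closed X" "\<And>X. X \<in> F \<Longrightarrow> X \<subseteq> K"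
    and dir: "\<And>X Y. X \<in> F \<Longrightarrow> Y \<in> F \<Longrightarrow> \<exists>Z\<in>F. Z \<subseteq> X \<inter> Y"
    and "open U" "\<Inter>F \<subseteq> U"
  shows "\<exists>X\<in>F. X \<subseteq> U"
proof (rule ccontr)
  assume none: "\<not> ?thesis"
  have lower: "\<exists>Z\<in>F. Z \<subseteq> \<Inter>G" if "finite G" "G \<subseteq> F" for G
    using that
  proof (induction rule: finite_induct)
    case empty
    then show ?case using assms(2) by auto
  next
    case (insert X G)
    then obtain Z where "Z \<in> F" "Z \<subseteq> \<Inter>G" by blast
    moreover obtain Z' where "Z' \<in> F" "Z' \<subseteq> X \<inter> Z" using dir insert.prems \<open>Z \<in> F\<close> by blast
    ultimately show ?case by auto
  qed
  have "K \<inter> (\<Inter>X\<in>F. X - U) \<noteq> {}"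
  proof (rule compact_imp_fip_image[OF assms(1)])
    show "closed (X - U)" if "X \<in> F" for X using assms(3)[OF that] \<open>open U\<close> by blast
    fix G assume "finite G" "G \<subseteq> F"
    then obtain Z where "Z \<in> F" "Z \<subseteq> \<Inter>G" using lower by blast
    moreover from this obtain z where "z \<in> Z" "z \<notin> U" using none by blast
    ultimately show "K \<inter> (\<Inter>X\<in>G. X - U) \<noteq> {}" using assms(4) by blast
  qed
  then show False using assms(2,7) by blast
qed

lemma inj_seq_approaching:
  fixes C :: "'a::metric_space set"
  assumes "closed C" "\<And>A. P A \<Longrightarrow> compact A" "\<And>A. P A \<Longrightarrow> A \<noteq> {}"
    and near: "\<And>\<delta>. \<delta> > 0 \<Longrightarrow> \<exists>A. P A \<and> A \<inter> C = {} \<and> A \<subseteq> nbhd C \<delta>"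
  shows "\<exists>A :: nat \<Rightarrow> 'a set. inj A \<and> (\<forall>k. P (A k) \<and> A k \<subseteq> nbhd C (inverse (real (Suc k))))"
proof -
  \<comment> \<open>Each set is chosen inside the gap around C left by its predecessor, so the distances
    \<open>setdist (A k) C\<close> strictly decrease.\<close>
  define good where "good k A \<longleftrightarrow> P A \<and> A \<inter> C = {} \<and> A \<subseteq> nbhd C (inverse (real (Suc k)))" for k A
  have closer: "\<exists>A'. good (Suc k) A' \<and> setdist A' C < setdist A C" if "good k A" for k A
  proof -
    have "A \<noteq> {}" "C \<noteq> {}"
      using that assms(3) unfolding good_def nbhd_def by auto
    then have "setdist A C > 0"
      using that assms(1,2) setdist_gt_0_compact_closed unfolding good_def by blast
    define \<delta> where "\<delta> = min (inverse (real (Suc (Suc k)))) (setdist A C)"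
    have "\<delta> > 0" using \<open>setdist A C > 0\<close> by (simp add: \<delta>_def)
    then obtain A' where A': "P A'" "A' \<inter> C = {}" "A' \<subseteq> nbhd C \<delta>" using near by blast
    have "nbhd C \<delta> \<subseteq> nbhd C (inverse (real (Suc (Suc k))))" "nbhd C \<delta> \<subseteq> nbhd C (setdist A C)"
      by (simp_all add: nbhd_mono \<delta>_def)
    with A' have "good (Suc k) A'" "A' \<subseteq> nbhd C (setdist A C)" unfolding good_def by auto
    obtain a' where "a' \<in> A'" using A'(1) assms(3) by blast
    then obtain c where "c \<in> C" "dist a' c < setdist A C"
      using \<open>A' \<subseteq> nbhd C (setdist A C)\<close> unfolding nbhd_def by blast
    then have "setdist A' C < setdist A C"
      using setdist_le_dist[OF \<open>a' \<in> A'\<close> \<open>c \<in> C\<close>] by linarith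
    then show ?thesis using \<open>good (Suc k) A'\<close> by blast
  qed
  have "\<exists>A. good 0 A" using near[of 1] unfolding good_def by simp
  then obtain A where A: "\<And>k. good k (A k)" "\<And>k. setdist (A (Suc k)) C < setdist (A k) C"
    using dependent_nat_choice[of good "\<lambda>_ A A'. setdist A' C < setdist A C"] closer by metis
  have "strict_mono (\<lambda>k. - setdist (A k) C)"
    using A(2) by (simp add: strict_mono_Suc_iff)
  then have "inj ((\<lambda>X. - setdist X C) \<circ> A)" by (simp add: o_def strict_mono_imp_inj_on)
  then have "inj A" by (rule inj_on_imageI2)
  then show ?thesis using A(1) unfolding good_def by blast
qed

section \<open>Chain limit sets and forward stable sets\<close>

lemma chain_limit_set_subset: "chain_limit_set S h x \<subseteq> S"
proof
  fix y assume "y \<in> chain_limit_set S h x"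
  then have "eps_chain_plus S h 1 x y" by (simp add: chain_limit_set_def)
  then show "y \<in> S" by (simp add: eps_chain_plus_def)
qed

lemma chain_limit_set_eq_Inter:
  assumes "closed S"
  shows "chain_limit_set S h x = (\<Inter>e\<in>{0<..}. closure {y. eps_chain_plus S h e x y})"
proof
  show "chain_limit_set S h x \<subseteq> (\<Inter>e\<in>{0<..}. closure {y. eps_chain_plus S h e x y})"
    unfolding chain_limit_set_def using closure_subset by fastforce
  show "(\<Inter>e\<in>{0<..}. closure {y. eps_chain_plus S h e x y}) \<subseteq> chain_limit_set S h x"
  proof
    fix y assume y: "y \<in> (\<Inter>e\<in>{0<..}. closure {y. eps_chain_plus S h e x y})"
    have "closure {y. eps_chain_plus S h 1 x y} \<subseteq> S"
      by (rule closure_minimal[OF _ assms]) (auto simp: eps_chain_plus_def)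
    then have "y \<in> S" using y by auto
    have "eps_chain_plus S h e x y" if "e > 0" for e
      using eps_chain_plus_closure[of "e/2" y S h x] y \<open>y \<in> S\<close> that by auto
    then show "y \<in> chain_limit_set S h x" unfolding chain_limit_set_def by blast
  qed
qed

lemma chain_limit_set_subset_forward_stable:
  assumes "forward_stable M h S" "x \<in> S"
  shows "chain_limit_set M h x \<subseteq> S"
proof
  fix y assume y: "y \<in> chain_limit_set M h x"
  have "y \<in> nbhd S \<delta>" if "\<delta> > 0" for \<delta>
  proof -
    obtain e where e: "e > 0" "\<forall>x\<in>S. \<forall>y. eps_chain M h e x y \<longrightarrow> y \<in> nbhd S \<delta>"
      using assms(1) \<open>\<delta> > 0\<close> unfolding forward_stable_def by blast
    have "eps_chain M h e x y"
      using y e(1) eps_chain_plus_imp_eps_chain unfolding chain_limit_set_def by blast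
    then show ?thesis using e(2) assms(2) by blast
  qed
  then have "y \<in> closure S" by (rule in_closure_if_in_all_nbhd)
  then show "y \<in> S" using assms(1) unfolding forward_stable_def by (simp add: closure_closed)
qed

lemma chain_transitive_imp_chain_recurrent:
  assumes "chain_transitive M h A" "a \<in> A"
  shows "chain_recurrent M h a"
proof -
  have A: "A \<subseteq> M" "h ` A = A" "\<And>e x y. e > 0 \<Longrightarrow> x \<in> A \<Longrightarrow> y \<in> A \<Longrightarrow> eps_chain A h e x y"
    using assms(1) unfolding chain_transitive_iff invariant_set_def by auto
  have "eps_chain_plus M h e a a" if "e > 0" for e
  proof -
    have "eps_chain A h e (h a) a" using A that assms(2) by blast
    then have "eps_chain M h e (h a) a" using A(1) eps_chain_mono by blast
    then show ?thesis using eps_chain_plus_cons[of a M h "h a" e a] that assms(2) A(1) by auto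
  qed
  then show ?thesis unfolding chain_recurrent_def chain_limit_set_def by auto
qed

lemma dissipative_attractor_nonempty: "dissipative_attractor M h A \<Longrightarrow> A \<noteq> {}"
  by (simp add: dissipative_attractor_def crh_attractor_def)

locale compact_dynamics =
  fixes M :: "'a::metric_space set" and f g :: "'a \<Rightarrow> 'a"
  assumes homeo: "homeomorphism M M f g" and compact_M: "compact M"
begin

lemma f_in: "x \<in> M \<Longrightarrow> f x \<in> M"
  using homeo unfolding homeomorphism_def by auto

lemma g_in: "x \<in> M \<Longrightarrow> g x \<in> M"
  using homeo unfolding homeomorphism_def by auto

lemma g_f: "x \<in> M \<Longrightarrow> g (f x) = x"
  using homeo unfolding homeomorphism_def by auto

lemma f_g: "x \<in> M \<Longrightarrow> f (g x) = x"
  using homeo unfolding homeomorphism_def by auto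

lemma closed_M: "closed M"
  using compact_M by (rule compact_imp_closed)

lemma inverse_dynamics: "compact_dynamics M g f"
  using homeomorphism_symD[OF homeo] compact_M by unfold_locales

lemma compact_closed_subset: "closed A \<Longrightarrow> A \<subseteq> M \<Longrightarrow> compact A"
  by (metis compact_M compact_Int_closed inf.absorb_iff2)

lemma dissipative_attractor_compact: "dissipative_attractor M h A \<Longrightarrow> compact A"
  unfolding dissipative_attractor_def crh_attractor_def chain_transitive_def invariant_set_def
  by (auto intro: compact_closed_subset)

lemma f_uniform:
  assumes "e > 0"
  obtains d where "d > 0" "\<And>x x'. x \<in> M \<Longrightarrow> x' \<in> M \<Longrightarrow> dist x' x < d \<Longrightarrow> dist (f x') (f x) < e"
proof -
  have "uniformly_continuous_on M f"
    using compact_uniformly_continuous homeo compact_M unfolding homeomorphism_def by blast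
  then obtain d where "d > 0" "\<forall>x\<in>M. \<forall>x'\<in>M. dist x' x < d \<longrightarrow> dist (f x') (f x) < e"
    using assms unfolding uniformly_continuous_on_def by blast
  then show ?thesis using that by blast
qed

lemma f_in_chain_limit_set: "x \<in> M \<Longrightarrow> f x \<in> chain_limit_set M f x"
  unfolding chain_limit_set_def eps_chain_plus_def by (auto intro: eps_chain.base f_in)

lemma image_chain_limit_set_subset: "f ` chain_limit_set M f x \<subseteq> chain_limit_set M f x"
proof
  fix y assume "y \<in> f ` chain_limit_set M f x"
  then obtain z where z: "z \<in> chain_limit_set M f x" "y = f z" by blast
  have "eps_chain_plus M f e x y" if "e > 0" for e
  proof -
    have "eps_chain M f e x z" using z(1) that eps_chain_plus_imp_eps_chain unfolding chain_limit_set_def by blast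
    then show ?thesis
      using z(2) that f_in[of z] eps_chain_in[of M f e x z] unfolding eps_chain_plus_def by auto
  qed
  then show "y \<in> chain_limit_set M f x" unfolding chain_limit_set_def by blast
qed

lemma forward_stable_image:
  assumes "forward_stable M f S"
  shows "forward_stable M f (f ` S)"
proof -
  have S: "closed S" "S \<noteq> {}" "S \<subseteq> M" "f ` S \<subseteq> S"
    and stable: "\<And>\<delta>. \<delta> > 0 \<Longrightarrow> \<exists>e>0. \<forall>x\<in>S. \<forall>y. eps_chain M f e x y \<longrightarrow> y \<in> nbhd S \<delta>"
    using assms unfolding forward_stable_def by auto
  have "continuous_on M f" using homeo by (simp add: homeomorphism_def)
  then have "continuous_on S f" using S(3) by (rule continuous_on_subset)
  then have "compact (f ` S)"
    using compact_closed_subset[OF S(1,3)] by (rule compact_continuous_image)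
  have "\<exists>e>0. \<forall>x\<in>f ` S. \<forall>y. eps_chain M f e x y \<longrightarrow> y \<in> nbhd (f ` S) \<delta>"
    if \<delta>: "\<delta> > 0" for \<delta>
  proof -
    obtain d where d: "d > 0" "\<And>x x'. x \<in> M \<Longrightarrow> x' \<in> M \<Longrightarrow> dist x' x < d \<Longrightarrow> dist (f x') (f x) < \<delta>/2"
      using f_uniform[OF half_gt_zero[OF \<delta>]] by blast
    obtain e where e: "e > 0" "\<forall>x\<in>S. \<forall>y. eps_chain M f e x y \<longrightarrow> y \<in> nbhd S d"
      using stable d(1) by blast
    have "y \<in> nbhd (f ` S) \<delta>" if x: "x \<in> f ` S" and chain: "eps_chain M f (min e (\<delta>/2)) x y" for x y
      using chain
    proof cases
      case base
      then show ?thesis using x subset_nbhd[OF \<open>\<delta> > 0\<close>, of "f ` S"] by auto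
    next
      case (step y')
      then have "eps_chain M f e x y'" using eps_chain_mono[OF step(1)] by simp
      then have "y' \<in> nbhd S d" using e(2) x S(4) by blast
      then obtain s where s: "s \<in> S" "dist y' s < d" unfolding nbhd_def by auto
      have "y' \<in> M" using eps_chain_in[OF step(1)] by blast
      then have "dist (f y') (f s) < \<delta>/2" using d(2)[of s y'] s S(3) by auto
      moreover have "dist (f y') y < \<delta>/2" using step(3) by simp
      ultimately have "dist y (f s) < \<delta>"
        using dist_triangle[of y "f s" "f y'"] dist_commute[of y "f y'"] by linarith
      then show ?thesis using s(1) unfolding nbhd_def by blast
    qed
    then show ?thesis using e(1) \<open>\<delta> > 0\<close> by (intro exI[of _ "min e (\<delta>/2)"]) auto
  qed
  then show ?thesis
    using compact_imp_closed[OF \<open>compact (f ` S)\<close>] S f_in unfolding forward_stable_def by auto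
qed

lemma forward_stable_Inter:
  assumes "Ch \<noteq> {}" "\<And>S. S \<in> Ch \<Longrightarrow> forward_stable M f S"
    and chain: "\<And>X Y. X \<in> Ch \<Longrightarrow> Y \<in> Ch \<Longrightarrow> X \<subseteq> Y \<or> Y \<subseteq> X"
  shows "forward_stable M f (\<Inter>Ch)"
proof -
  have S: "closed S" "S \<noteq> {}" "S \<subseteq> M" "f ` S \<subseteq> S"
    and stable: "\<And>\<delta>. \<delta> > 0 \<Longrightarrow> \<exists>e>0. \<forall>x\<in>S. \<forall>y. eps_chain M f e x y \<longrightarrow> y \<in> nbhd S \<delta>"
    if "S \<in> Ch" for S
    using assms(2)[OF that] unfolding forward_stable_def by auto
  have member_inside: "\<exists>S\<in>Ch. S \<subseteq> U" if "open U" "\<Inter>Ch \<subseteq> U" for U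
  proof (rule compact_directed_Inter_subset_open[OF compact_M assms(1) S(1) S(3) _ that])
    show "\<exists>Z\<in>Ch. Z \<subseteq> X \<inter> Y" if "X \<in> Ch" "Y \<in> Ch" for X Y
      using chain[OF that] that by blast
  qed
  have "\<Inter>Ch \<noteq> {}"
    using member_inside[of "{}"] S(2) by auto
  moreover have "\<exists>e>0. \<forall>x\<in>\<Inter>Ch. \<forall>y. eps_chain M f e x y \<longrightarrow> y \<in> nbhd (\<Inter>Ch) \<delta>" if "\<delta> > 0" for \<delta>
  proof -
    obtain S where "S \<in> Ch" "S \<subseteq> nbhd (\<Inter>Ch) (\<delta>/2)"
      using member_inside[OF open_nbhd subset_nbhd[of "\<delta>/2"]] \<open>\<delta> > 0\<close> by auto
    moreover obtain e where "e > 0" "\<forall>x\<in>S. \<forall>y. eps_chain M f e x y \<longrightarrow> y \<in> nbhd S (\<delta>/2)"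
      using stable[OF \<open>S \<in> Ch\<close>, of "\<delta>/2"] \<open>\<delta> > 0\<close> by auto
    ultimately show ?thesis
      using nbhd_subset_nbhd[of S "\<Inter>Ch" "\<delta>/2" "\<delta>/2"] by (intro exI[of _ e]) auto
  qed
  moreover have "closed (\<Inter>Ch)" using S(1) by (intro closed_Inter) blast
  moreover have "\<Inter>Ch \<subseteq> M" using S(3) assms(1) by blast
  moreover have "f ` \<Inter>Ch \<subseteq> \<Inter>Ch" using S(4) by blast
  ultimately show ?thesis unfolding forward_stable_def by blast
qed

lemma exists_minimal_forward_stable:
  assumes "forward_stable M f T"
  obtains S where "forward_stable M f S" "S \<subseteq> T"
    "\<And>S'. forward_stable M f S' \<Longrightarrow> S' \<subseteq> S \<Longrightarrow> S' = S"
proof -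
  let ?A = "{S. forward_stable M f S \<and> S \<subseteq> T}"
  let ?r = "relation_of (\<lambda>X Y. Y \<subseteq> X) ?A"
  have po: "partial_order_on ?A ?r"
    unfolding relation_of_def partial_order_on_def preorder_on_def refl_on_def trans_def antisym_def
    by blast
  have bounded: "\<exists>U\<in>?A. \<forall>X\<in>Ch. U \<subseteq> X" if "Ch \<in> Chains ?r" for Ch
  proof (cases "Ch = {}")
    case True
    then show ?thesis using assms by (intro bexI[of _ T]) simp_all
  next
    case False
    have "Ch \<subseteq> ?A"
    proof
      fix X assume "X \<in> Ch"
      then have "(X, X) \<in> ?r" using that unfolding Chains_def by blast
      then show "X \<in> ?A" unfolding relation_of_def by blast
    qed
    moreover have "X \<subseteq> Y \<or> Y \<subseteq> X" if "X \<in> Ch" "Y \<in> Ch" for X Y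
      using \<open>Ch \<in> Chains ?r\<close> that unfolding Chains_def relation_of_def by auto
    ultimately have "forward_stable M f (\<Inter>Ch)" using False by (intro forward_stable_Inter) auto
    then show ?thesis using False \<open>Ch \<subseteq> ?A\<close> by blast
  qed
  obtain S where "S \<in> ?A" "\<forall>S'\<in>?A. S' \<subseteq> S \<longrightarrow> S' = S"
    using predicate_Zorn[OF po bounded] by blast
  then show ?thesis by (intro that[of S]) auto
qed

lemma chain_limit_set_approx:
  assumes "\<delta> > 0"
  obtains e where "e > 0" "closure {y. eps_chain_plus M f e x y} \<subseteq> nbhd (chain_limit_set M f x) \<delta>"
proof -
  define P where "P e = closure {y. eps_chain_plus M f e x y}" for e
  have P_closed: "closed (P e)" and P_sub: "P e \<subseteq> M" for e
    unfolding P_def by (auto intro!: closure_minimal[OF _ closed_M] simp: eps_chain_plus_def)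
  have "\<exists>X\<in>P ` {0<..}. X \<subseteq> nbhd (chain_limit_set M f x) \<delta>"
  proof (rule compact_directed_Inter_subset_open[OF compact_M])
    have "(1::real) \<in> {0<..}" by simp
    then show "P ` {0<..} \<noteq> {}" by blast
    show "\<exists>Z\<in>P ` {0<..}. Z \<subseteq> X \<inter> Y" if XY: "X \<in> P ` {0<..}" "Y \<in> P ` {0<..}" for X Y
    proof -
      obtain e e' where "e > 0" "e' > 0" "X = P e" "Y = P e'" using XY by auto
      moreover have "P (min e e') \<subseteq> P e \<inter> P e'"
        unfolding P_def by (intro Int_greatest closure_mono) (auto intro: eps_chain_plus_mono)
      ultimately show ?thesis by (intro bexI[of _ "P (min e e')"]) auto
    qed
    have "\<Inter>(P ` {0<..}) = chain_limit_set M f x"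
      unfolding P_def by (rule chain_limit_set_eq_Inter[OF closed_M, symmetric])
    then show "\<Inter>(P ` {0<..}) \<subseteq> nbhd (chain_limit_set M f x) \<delta>"
      using subset_nbhd[OF assms] by simp
    show "closed X" if "X \<in> P ` {0<..}" for X using that P_closed by blast
    show "X \<subseteq> M" if "X \<in> P ` {0<..}" for X using that P_sub by blast
  qed (rule open_nbhd)
  then show ?thesis using that unfolding P_def by blast
qed

lemma forward_stable_chain_limit_set:
  assumes "x \<in> M"
  shows "forward_stable M f (chain_limit_set M f x)"
proof -
  let ?\<Omega> = "chain_limit_set M f x"
  have "\<exists>e>0. \<forall>a\<in>?\<Omega>. \<forall>y. eps_chain M f e a y \<longrightarrow> y \<in> nbhd ?\<Omega> \<delta>" if "\<delta> > 0" for \<delta>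
  proof -
    obtain e where e: "e > 0" "closure {y. eps_chain_plus M f e x y} \<subseteq> nbhd ?\<Omega> \<delta>"
      using chain_limit_set_approx[OF \<open>\<delta> > 0\<close>] by blast
    have "y \<in> nbhd ?\<Omega> \<delta>" if "a \<in> ?\<Omega>" "eps_chain M f e a y" for a y
    proof -
      have "eps_chain_plus M f e x a" using that(1) e(1) by (simp add: chain_limit_set_def)
      then have "eps_chain_plus M f e x y" using that(2) by (rule eps_chain_plus_trans)
      then show ?thesis using e(2) closure_subset by blast
    qed
    then show ?thesis using e(1) by blast
  qed
  moreover have "closed ?\<Omega>" using chain_limit_set_eq_Inter[OF closed_M] by auto
  moreover have "?\<Omega> \<noteq> {}" using f_in_chain_limit_set[OF assms] by blast
  ultimately show ?thesis
    using chain_limit_set_subset image_chain_limit_set_subset unfolding forward_stable_def by blast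
qed

lemma forward_stable_shadow_chain:
  assumes S: "forward_stable M f S" and "e > 0" "\<eta> > 0"
  obtains e' where "e' > 0"
    "\<And>x z. x \<in> S \<Longrightarrow> eps_chain M f e' x z \<Longrightarrow> \<exists>z'\<in>S. dist z z' < \<eta> \<and> eps_chain S f e x z'"
proof -
  have SM: "S \<subseteq> M" using S unfolding forward_stable_def by auto
  obtain \<eta>0 where \<eta>0: "\<eta>0 > 0"
    "\<And>x x'. x \<in> M \<Longrightarrow> x' \<in> M \<Longrightarrow> dist x' x < \<eta>0 \<Longrightarrow> dist (f x') (f x) < e/3"
    using f_uniform[of "e/3"] \<open>e > 0\<close> by auto
  define \<eta>' where "\<eta>' = min \<eta> (min \<eta>0 (e/3))"
  have "\<eta>' > 0" using \<eta>0(1) \<open>e > 0\<close> \<open>\<eta> > 0\<close> by (simp add: \<eta>'_def)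
  then obtain e0 where e0: "e0 > 0" "\<forall>x\<in>S. \<forall>y. eps_chain M f e0 x y \<longrightarrow> y \<in> nbhd S \<eta>'"
    using S unfolding forward_stable_def by blast
  define e' where "e' = min e0 (e/3)"
  have shadow: "\<exists>z'\<in>S. dist z z' < \<eta>' \<and> eps_chain S f e x z'"
    if "eps_chain M f e' x z" "x \<in> S" for x z
    using that
  proof (induction rule: eps_chain.induct)
    case (base x)
    then show ?case using \<open>\<eta>' > 0\<close> by (intro bexI[of _ x]) (auto intro: eps_chain.base)
  next
    case (step x y w)
    then obtain z' where z': "z' \<in> S" "dist y z' < \<eta>'" "eps_chain S f e x z'" by blast
    have "eps_chain M f e' x w" using step.hyps by (rule eps_chain.step)
    then have "eps_chain M f e0 x w" using eps_chain_mono[of M f e' x w e0 M] by (simp add: e'_def)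
    then obtain w' where w': "w' \<in> S" "dist w w' < \<eta>'"
      using e0(2) step.prems unfolding nbhd_def by blast
    have "y \<in> M" using eps_chain_in[OF step.hyps(1)] by blast
    then have "dist (f z') (f y) < e/3"
      using \<eta>0(2)[of y z'] z'(1,2) SM unfolding \<eta>'_def by (auto simp: dist_commute)
    moreover have "dist (f y) w < e/3" using step.hyps(3) by (simp add: e'_def)
    moreover have "dist w w' < e/3" using w'(2) by (simp add: \<eta>'_def)
    ultimately have "dist (f z') w' < e"
      using dist_triangle[of "f z'" w' w] dist_triangle[of "f z'" w "f y"] by linarith
    then have "eps_chain S f e x w'" using z'(3) w'(1) by (blast intro: eps_chain.step)
    then show ?case using w' by blast
  qed
  have "\<eta>' \<le> \<eta>" by (simp add: \<eta>'_def)
  show ?thesis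
  proof (rule that)
    show "e' > 0" using e0(1) \<open>e > 0\<close> by (simp add: e'_def)
    fix x z assume "x \<in> S" "eps_chain M f e' x z"
    then obtain z' where "z' \<in> S" "dist z z' < \<eta>'" "eps_chain S f e x z'" using shadow by blast
    then show "\<exists>z'\<in>S. dist z z' < \<eta> \<and> eps_chain S f e x z'" using \<open>\<eta>' \<le> \<eta>\<close> by force
  qed
qed

lemma forward_stable_shadow:
  assumes S: "forward_stable M f S" and "e > 0"
  obtains e' where "e' > 0"
    "\<And>x y. x \<in> S \<Longrightarrow> y \<in> S \<Longrightarrow> eps_chain_plus M f e' x y \<Longrightarrow> eps_chain S f e x y"
proof -
  obtain \<eta> where \<eta>: "\<eta> > 0"
    "\<And>x x'. x \<in> M \<Longrightarrow> x' \<in> M \<Longrightarrow> dist x' x < \<eta> \<Longrightarrow> dist (f x') (f x) < e/2"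
    using f_uniform[OF half_gt_zero[OF \<open>e > 0\<close>]] by blast
  obtain e1 where e1: "e1 > 0"
    "\<And>x z. x \<in> S \<Longrightarrow> eps_chain M f e1 x z \<Longrightarrow> \<exists>z'\<in>S. dist z z' < \<eta> \<and> eps_chain S f e x z'"
    using forward_stable_shadow_chain[OF S \<open>e > 0\<close> \<eta>(1)] by blast
  have SM: "S \<subseteq> M" using S unfolding forward_stable_def by auto
  have "eps_chain S f e x y"
    if xy: "x \<in> S" "y \<in> S" and "eps_chain_plus M f (min e1 (e/2)) x y" for x y
  proof -
    obtain z where z: "eps_chain M f (min e1 (e/2)) x z" "dist (f z) y < min e1 (e/2)"
      using \<open>eps_chain_plus M f (min e1 (e/2)) x y\<close> unfolding eps_chain_plus_def by blast
    then have "eps_chain M f e1 x z" using eps_chain_mono by fastforce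
    then obtain z' where z': "z' \<in> S" "dist z z' < \<eta>" "eps_chain S f e x z'"
      using e1(2) xy(1) by blast
    have "dist (f z') (f z) < e/2"
      using \<eta>(2)[of z z'] z'(1,2) SM eps_chain_in[OF z(1)] by (auto simp: dist_commute)
    then have "dist (f z') y < e" using z(2) dist_triangle[of "f z'" y "f z"] by linarith
    then show ?thesis using z'(3) xy(2) by (blast intro: eps_chain.step)
  qed
  moreover have "min e1 (e/2) > 0" using e1(1) \<open>e > 0\<close> by simp
  ultimately show ?thesis using that by blast
qed

lemma minimal_forward_stable_crh_attractor:
  assumes S: "forward_stable M f S"
    and minimal: "\<And>S'. forward_stable M f S' \<Longrightarrow> S' \<subseteq> S \<Longrightarrow> S' = S"
  shows "crh_attractor M f S"
proof -
  have props: "closed S" "S \<noteq> {}" "S \<subseteq> M" "f ` S \<subseteq> S"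
    and stable: "\<forall>\<delta>>0. \<exists>e>0. \<forall>x\<in>S. \<forall>y. eps_chain M f e x y \<longrightarrow> y \<in> nbhd S \<delta>"
    using S unfolding forward_stable_def by auto
  have inv: "invariant_set M f S"
    using minimal[OF forward_stable_image[OF S] props(4)] props(3) unfolding invariant_set_def by auto
  have \<Omega>: "chain_limit_set M f x = S" if "x \<in> S" for x
  proof -
    have "x \<in> M" using that props(3) by blast
    then show ?thesis
      using minimal[OF forward_stable_chain_limit_set chain_limit_set_subset_forward_stable[OF S that]]
      by blast
  qed
  have "eps_chain S f e x y" if e: "e > 0" and xy: "x \<in> S" "y \<in> S" for e x y
  proof -
    obtain e' where e': "e' > 0"
      "\<And>x y. x \<in> S \<Longrightarrow> y \<in> S \<Longrightarrow> eps_chain_plus M f e' x y \<Longrightarrow> eps_chain S f e x y"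
      using forward_stable_shadow[OF S e] by blast
    have "eps_chain_plus M f e' x y"
      using \<Omega>[OF xy(1)] xy(2) e'(1) unfolding chain_limit_set_def by blast
    then show ?thesis using e'(2) xy by blast
  qed
  then have "chain_transitive M f S" unfolding chain_transitive_iff using props(1) inv by blast
  moreover have "stable_set M f S" unfolding stable_set_iff using props(1) inv stable by blast
  ultimately show ?thesis unfolding crh_attractor_def using props(2) by blast
qed

lemma exists_crh_attractor_in:
  assumes "forward_stable M f T"
  shows "\<exists>A. crh_attractor M f A \<and> A \<subseteq> T"
  using exists_minimal_forward_stable[OF assms] minimal_forward_stable_crh_attractor by metis

section \<open>Dissipative attractors near a reversible core\<close>

lemma chain_recurrent_near:
  assumes "e > 0"
  obtains \<theta> where "\<theta> > 0"
    "\<And>p p'. p \<in> M \<Longrightarrow> p' \<in> M \<Longrightarrow> chain_recurrent M f p \<Longrightarrow> dist p' p < \<theta> \<Longrightarrow>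
       eps_chain M f e p p' \<and> eps_chain M f e p' p"
proof -
  obtain d where d: "d > 0" "\<And>x x'. x \<in> M \<Longrightarrow> x' \<in> M \<Longrightarrow> dist x' x < d \<Longrightarrow> dist (f x') (f x) < e/2"
    using f_uniform[OF half_gt_zero[OF assms]] by blast
  have "eps_chain M f e p p' \<and> eps_chain M f e p' p"
    if p: "p \<in> M" "p' \<in> M" "chain_recurrent M f p" "dist p' p < min d (e/2)" for p p'
  proof -
    have "eps_chain_plus M f (e/2) p p"
      using p(3) assms unfolding chain_recurrent_def chain_limit_set_def by simp
    then obtain z where z: "eps_chain M f (e/2) p z" "dist (f z) p < e/2"
      unfolding eps_chain_plus_def by blast
    have "dist (f z) p' < e"
      using z(2) p(4) dist_triangle[of "f z" p' p] dist_commute[of p' p] by linarith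
    moreover have "eps_chain M f e p z" using eps_chain_mono[OF z(1), of e M] assms by simp
    ultimately have forward: "eps_chain M f e p p'" using p(2) by (blast intro: eps_chain.step)
    have "dist (f p') (f p) < e/2" using d(2)[of p p'] p by simp
    then have "eps_chain_plus M f (e/2 + e/2) p' p"
      using eps_chain_plus_perturb_start[OF z(1) p(2) _ p(1) z(2)] by blast
    then show ?thesis using forward eps_chain_plus_imp_eps_chain by auto
  qed
  moreover have "min d (e/2) > 0" using d(1) assms by simp
  ultimately show ?thesis using that by blast
qed

lemma openin_chain_class:
  assumes "e > 0" "\<And>q. q \<in> chain_class M f e c \<Longrightarrow> chain_recurrent M f q"
  shows "openin (top_of_set M) (chain_class M f e c)"
  unfolding openin_euclidean_subtopology_iff
proof (intro conjI ballI)
  show "chain_class M f e c \<subseteq> M" by (auto simp: chain_class_def)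
  fix q assume q: "q \<in> chain_class M f e c"
  obtain \<theta> where \<theta>: "\<theta> > 0"
    "\<And>p p'. p \<in> M \<Longrightarrow> p' \<in> M \<Longrightarrow> chain_recurrent M f p \<Longrightarrow> dist p' p < \<theta> \<Longrightarrow>
       eps_chain M f e p p' \<and> eps_chain M f e p' p"
    using chain_recurrent_near[OF assms(1)] by blast
  have "q \<in> M" using q by (simp add: chain_class_def)
  have "p' \<in> chain_class M f e c" if p': "p' \<in> M" "dist p' q < \<theta>" for p'
    using \<theta>(2)[OF \<open>q \<in> M\<close> p'(1) assms(2)[OF q] p'(2)] q p'(1) eps_chain_trans
    unfolding chain_class_def by blast
  then show "\<exists>d>0. \<forall>p'\<in>M. dist p' q < d \<longrightarrow> p' \<in> chain_class M f e c" using \<theta>(1) by blast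
qed

lemma closedin_chain_class:
  assumes "e > 0" "\<And>q. q \<in> M \<Longrightarrow> q \<in> closure (chain_class M f e c) \<Longrightarrow> chain_recurrent M f q"
  shows "closedin (top_of_set M) (chain_class M f e c)"
proof -
  let ?Q = "chain_class M f e c"
  obtain \<theta> where \<theta>: "\<theta> > 0"
    "\<And>p p'. p \<in> M \<Longrightarrow> p' \<in> M \<Longrightarrow> chain_recurrent M f p \<Longrightarrow> dist p' p < \<theta> \<Longrightarrow>
       eps_chain M f e p p' \<and> eps_chain M f e p' p"
    using chain_recurrent_near[OF assms(1)] by blast
  have QM: "?Q \<subseteq> M" by (auto simp: chain_class_def)
  have "closure ?Q \<subseteq> ?Q"
  proof
    fix y assume y: "y \<in> closure ?Q"
    have "y \<in> M" using y closure_minimal[OF QM closed_M] by (rule subsetD[rotated])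
    obtain q where q: "q \<in> ?Q" "dist q y < \<theta>"
      using y \<theta>(1) unfolding closure_approachable by auto
    have "q \<in> M" using q(1) QM by blast
    have "eps_chain M f e y q" "eps_chain M f e q y"
      using \<theta>(2)[OF \<open>y \<in> M\<close> \<open>q \<in> M\<close> assms(2)[OF \<open>y \<in> M\<close> y] q(2)] by auto
    then show "y \<in> ?Q" using q(1) \<open>y \<in> M\<close> eps_chain_trans unfolding chain_class_def by blast
  qed
  then have "closed ?Q" by (simp add: closure_subset_eq)
  then show ?thesis by (rule closed_subset[OF QM])
qed

lemma chain_class_eq_space:
  assumes "connected M" "e > 0" "c \<in> M"
    and recurrent: "\<And>q. q \<in> M \<Longrightarrow> q \<in> closure (chain_class M f e c) \<Longrightarrow> chain_recurrent M f q"
  shows "chain_class M f e c = M"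
proof -
  let ?Q = "chain_class M f e c"
  have "openin (top_of_set M) ?Q"
  proof (rule openin_chain_class[OF assms(2)])
    fix q assume "q \<in> ?Q"
    then show "chain_recurrent M f q"
      using recurrent closure_subset[of ?Q] by (auto simp: chain_class_def)
  qed
  moreover have "closedin (top_of_set M) ?Q" using closedin_chain_class[OF assms(2) recurrent] .
  ultimately have "?Q = {} \<or> ?Q = M" using assms(1) unfolding connected_clopen by blast
  moreover have "c \<in> ?Q" using assms(3) by (auto simp: chain_class_def intro: eps_chain.base)
  ultimately show ?thesis by blast
qed

lemma exists_non_chain_recurrent_near:
  assumes "connected M" "crh_attractor M f C" "C \<noteq> M" "\<eta> > 0"
  shows "\<exists>p\<in>M - C. p \<in> nbhd C \<eta> \<and> \<not> chain_recurrent M f p"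
proof (rule ccontr)
  assume none: "\<not> (\<exists>p\<in>M - C. p \<in> nbhd C \<eta> \<and> \<not> chain_recurrent M f p)"
  have recurrent: "chain_recurrent M f q" if q: "q \<in> M" "q \<in> nbhd C \<eta>" for q
  proof (cases "q \<in> C")
    case True
    then show ?thesis
      using chain_transitive_imp_chain_recurrent assms(2) by (auto simp: crh_attractor_def)
  qed (use none q in blast)
  have C: "closed C" "C \<subseteq> M" "C \<noteq> {}"
    and stable: "\<And>\<delta>. \<delta> > 0 \<Longrightarrow> \<exists>e>0. \<forall>x\<in>C. \<forall>y. eps_chain M f e x y \<longrightarrow> y \<in> nbhd C \<delta>"
    using assms(2) unfolding crh_attractor_def stable_set_iff invariant_set_def by auto
  obtain z where z: "z \<in> M" "z \<notin> C" using C(2) assms(3) by blast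
  have "open (- C)" using C(1) by (simp add: open_Compl)
  then obtain r where r: "r > 0" "ball z r \<subseteq> - C"
    using open_contains_ball_eq[of "- C" z] z(2) by auto
  define r' where "r' = min r \<eta>"
  have "r' > 0" "r' \<le> \<eta>" using r(1) assms(4) by (simp_all add: r'_def)
  then obtain e where e: "e > 0" "\<forall>x\<in>C. \<forall>y. eps_chain M f e x y \<longrightarrow> y \<in> nbhd C (r'/2)"
    using stable[of "r'/2"] by auto
  obtain c where c: "c \<in> C" using C(3) by blast
  have Q_near: "chain_class M f e c \<subseteq> nbhd C (r'/2)" using e(2) c unfolding chain_class_def by blast
  have "closure (chain_class M f e c) \<subseteq> nbhd C \<eta>"
    using closure_subset_nbhd[OF Q_near, of \<eta>] \<open>r' > 0\<close> \<open>r' \<le> \<eta>\<close> by linarith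
  then have "chain_class M f e c = M"
    using chain_class_eq_space[OF assms(1) e(1)] recurrent c C(2) by blast
  then obtain a where "a \<in> C" "dist z a < r'/2" using z(1) Q_near unfolding nbhd_def by blast
  then have "a \<in> ball z r" using \<open>r' > 0\<close> by (simp add: r'_def)
  then show False using r(2) \<open>a \<in> C\<close> by blast
qed

lemma chain_limit_set_near_stable_set:
  assumes "stable_set M f C" "\<delta> > 0"
  obtains d where "d > 0" "\<And>p. p \<in> M \<Longrightarrow> p \<in> nbhd C d \<Longrightarrow> chain_limit_set M f p \<subseteq> nbhd C \<delta>"
proof -
  obtain e where e: "e > 0" "\<forall>x\<in>C. \<forall>y. eps_chain M f e x y \<longrightarrow> y \<in> nbhd C \<delta>"
    using assms unfolding stable_set_iff by blast
  obtain d where d: "d > 0" "\<And>x x'. x \<in> M \<Longrightarrow> x' \<in> M \<Longrightarrow> dist x' x < d \<Longrightarrow> dist (f x') (f x) < e/2"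
    using f_uniform[OF half_gt_zero[OF e(1)]] by blast
  have CM: "C \<subseteq> M" using assms(1) unfolding stable_set_def invariant_set_def by blast
  have "chain_limit_set M f p \<subseteq> nbhd C \<delta>" if p: "p \<in> M" "p \<in> nbhd C d" for p
  proof
    fix y assume "y \<in> chain_limit_set M f p"
    then have "eps_chain_plus M f (e/2) p y" using e(1) unfolding chain_limit_set_def by simp
    then obtain z where z: "eps_chain M f (e/2) p z" "dist (f z) y < e/2" "y \<in> M"
      unfolding eps_chain_plus_def by blast
    obtain c where c: "c \<in> C" "dist p c < d" using p(2) unfolding nbhd_def by blast
    have "c \<in> M" using c(1) CM by blast
    then have "dist (f c) (f p) < e/2" using d(2)[of p c] p(1) c(2) by (simp add: dist_commute)
    then have "eps_chain_plus M f (e/2 + e/2) c y"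
      using eps_chain_plus_perturb_start[OF z(1) \<open>c \<in> M\<close> _ z(3) z(2)] by blast
    then show "y \<in> nbhd C \<delta>" using e(2) c(1) eps_chain_plus_imp_eps_chain by fastforce
  qed
  with d(1) show ?thesis using that by blast
qed

lemma dissipative_attractor_near:
  assumes "connected M" "reversible_core M f C" "C \<noteq> M" "\<delta> > 0"
  shows "\<exists>A. dissipative_attractor M f A \<and> A \<inter> C = {} \<and> A \<subseteq> nbhd C \<delta>"
proof -
  have crh: "crh_attractor M f C" and core: "\<And>x. x \<in> M - C \<Longrightarrow> \<not> chain_reaches M f x C"
    using assms(2) unfolding reversible_core_def dissipative_attractor_iff by auto
  obtain d where d: "d > 0" "\<And>p. p \<in> M \<Longrightarrow> p \<in> nbhd C d \<Longrightarrow> chain_limit_set M f p \<subseteq> nbhd C \<delta>"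
    using chain_limit_set_near_stable_set[OF _ assms(4)] crh unfolding crh_attractor_def by blast
  obtain p where p: "p \<in> M - C" "p \<in> nbhd C d" "\<not> chain_recurrent M f p"
    using exists_non_chain_recurrent_near[OF assms(1) crh assms(3) d(1)] by blast
  obtain A where A: "crh_attractor M f A" "A \<subseteq> chain_limit_set M f p"
    using exists_crh_attractor_in[OF forward_stable_chain_limit_set] p(1) by blast
  have to_A: "eps_chain M f e p a" if "a \<in> A" "e > 0" for a e
    using A(2) that eps_chain_plus_imp_eps_chain unfolding chain_limit_set_def by blast
  have "A \<noteq> {}" using A(1) by (simp add: crh_attractor_def)
  then have "chain_reaches M f p A" using to_A unfolding chain_reaches_def by blast
  moreover have "p \<notin> A"
    using p(3) A(1) chain_transitive_imp_chain_recurrent unfolding crh_attractor_def by blast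
  moreover have "A \<inter> C = {}"
  proof (rule ccontr)
    assume "A \<inter> C \<noteq> {}"
    then obtain a where "a \<in> A" "a \<in> C" by blast
    then have "chain_reaches M f p C" using to_A unfolding chain_reaches_def by blast
    then show False using core p(1) by blast
  qed
  moreover have "A \<subseteq> nbhd C \<delta>" using A(2) d(2) p(1,2) by blast
  ultimately show ?thesis using A(1) p(1) unfolding dissipative_attractor_iff by blast
qed

section \<open>Reversing chains\<close>

lemma eps_chain_reverse:
  assumes "e > 0"
  obtains \<eta> where "\<eta> > 0" "\<And>S x y. S \<subseteq> M \<Longrightarrow> eps_chain S g \<eta> x y \<Longrightarrow> eps_chain S f e y x"
proof -
  obtain d where d: "d > 0" "\<And>x x'. x \<in> M \<Longrightarrow> x' \<in> M \<Longrightarrow> dist x' x < d \<Longrightarrow> dist (f x') (f x) < e"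
    using f_uniform[OF assms] by blast
  have "eps_chain S f e y x" if S: "S \<subseteq> M" and chain: "eps_chain S g d x y" for S x y
    using chain
  proof (induction rule: eps_chain.induct)
    case (base x)
    then show ?case by (rule eps_chain.base)
  next
    case (step x y z)
    have "y \<in> M" "z \<in> M" using eps_chain_in[OF step.hyps(1)] step.hyps(2) S by auto
    then have "dist (f z) (f (g y)) < e"
      using d(2)[of "g y" z] step.hyps(3) g_in by (simp add: dist_commute)
    then have "dist (f z) y < e" using f_g[OF \<open>y \<in> M\<close>] by simp
    then show ?case using eps_chain_cons[OF step.hyps(2) _ step.IH] by blast
  qed
  then show ?thesis using that d(1) by blast
qed

lemma chain_reaches_if_approx:
  assumes "p \<in> M" "f ` A \<subseteq> A"
    and approx: "\<And>e d. e > 0 \<Longrightarrow> d > 0 \<Longrightarrow> \<exists>y\<in>M. dist y p < d \<and> (\<exists>a\<in>A. eps_chain M f e y a)"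
  shows "chain_reaches M f p A"
  unfolding chain_reaches_def
proof (intro allI impI)
  fix e :: real assume "e > 0"
  obtain d where d: "d > 0" "\<And>x x'. x \<in> M \<Longrightarrow> x' \<in> M \<Longrightarrow> dist x' x < d \<Longrightarrow> dist (f x') (f x) < e/2"
    using f_uniform[OF half_gt_zero[OF \<open>e > 0\<close>]] by blast
  obtain y a where y: "y \<in> M" "dist y p < d" and a: "a \<in> A" "eps_chain M f (e/2) y a"
    using approx[OF half_gt_zero[OF \<open>e > 0\<close>] d(1)] by blast
  have "dist (f p) (f y) < e/2" using d(2)[of y p] y assms(1) by (simp add: dist_commute)
  moreover have "f a \<in> M" using eps_chain_in[OF a(2)] f_in by blast
  moreover have "dist (f a) (f a) < e/2" using \<open>e > 0\<close> by simp
  ultimately have "eps_chain_plus M f (e/2 + e/2) p (f a)"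
    by (rule eps_chain_plus_perturb_start[OF a(2) assms(1)])
  then show "\<exists>a\<in>A. eps_chain M f e p a"
    using assms(2) a(1) eps_chain_plus_imp_eps_chain by fastforce
qed

lemma eps_chain_avoids_uniformly:
  assumes "compact K" "K \<subseteq> M" "f ` A \<subseteq> A" "\<And>p. p \<in> K \<Longrightarrow> \<not> chain_reaches M f p A"
  shows "\<exists>e>0. \<forall>y\<in>K. \<forall>a\<in>A. \<not> eps_chain M f e y a"
proof (rule ccontr)
  assume "\<not> ?thesis"
  then have "\<forall>n. \<exists>y\<in>K. \<exists>a\<in>A. eps_chain M f (inverse (real (Suc n))) y a"
    by (metis inverse_positive_iff_positive of_nat_0_less_iff zero_less_Suc)
  then obtain y where y: "\<And>n. y n \<in> K" "\<And>n. \<exists>a\<in>A. eps_chain M f (inverse (real (Suc n))) (y n) a"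
    by metis
  obtain p r where p: "p \<in> K" "strict_mono r" "(y \<circ> r) \<longlonglongrightarrow> p"
    using compact_imp_seq_compact[OF assms(1)] y(1) unfolding seq_compact_def by metis
  have "chain_reaches M f p A"
  proof (rule chain_reaches_if_approx)
    show "p \<in> M" using p(1) assms(2) by blast
    fix e d :: real assume "e > 0" "d > 0"
    obtain N1 where N1: "\<And>n. n \<ge> N1 \<Longrightarrow> dist (y (r n)) p < d"
      using p(3) \<open>d > 0\<close> unfolding lim_sequentially by auto
    obtain N2 where N2: "inverse (real (Suc N2)) < e" using reals_Archimedean \<open>e > 0\<close> by blast
    define m where "m = r (max N1 N2)"
    have "N2 \<le> m" using seq_suble[OF p(2), of "max N1 N2"] unfolding m_def by linarith
    then have "inverse (real (Suc m)) \<le> inverse (real (Suc N2))"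
      by (intro le_imp_inverse_le) auto
    then have "inverse (real (Suc m)) \<le> e" using N2 by linarith
    moreover obtain a where a: "a \<in> A" "eps_chain M f (inverse (real (Suc m))) (y m) a"
      using y(2)[of m] by blast
    ultimately have "eps_chain M f e (y m) a" using eps_chain_mono[OF a(2)] by blast
    moreover have "dist (y m) p < d" using N1[of "max N1 N2"] unfolding m_def by simp
    ultimately show "\<exists>y\<in>M. dist y p < d \<and> (\<exists>a\<in>A. eps_chain M f e y a)"
      using y(1)[of m] assms(2) a(1) by blast
  qed (rule assms(3))
  then show False using assms(4) p(1) by blast
qed

lemma invariant_set_inverse:
  assumes "invariant_set M f A"
  shows "invariant_set M g A"
proof -
  have A: "A \<subseteq> M" "f ` A = A" using assms unfolding invariant_set_def by auto
  then have "g ` A = g ` f ` A" by simp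
  also have "\<dots> = A" unfolding image_image using g_f A(1) by (simp add: subset_eq)
  finally show ?thesis using A(1) unfolding invariant_set_def by simp
qed

lemma chain_transitive_inverse:
  assumes "chain_transitive M f C"
  shows "chain_transitive M g C"
proof -
  have C: "closed C" "invariant_set M f C" "C \<subseteq> M"
    and transitive: "\<And>e x y. e > 0 \<Longrightarrow> x \<in> C \<Longrightarrow> y \<in> C \<Longrightarrow> eps_chain C f e x y"
    using assms unfolding chain_transitive_iff invariant_set_def by auto
  have "eps_chain C g e x y" if e: "e > 0" and xy: "x \<in> C" "y \<in> C" for e x y
  proof -
    obtain \<eta> where "\<eta> > 0" "\<And>S x y. S \<subseteq> M \<Longrightarrow> eps_chain S f \<eta> x y \<Longrightarrow> eps_chain S g e y x"
      using compact_dynamics.eps_chain_reverse[OF inverse_dynamics e] by blast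
    then show ?thesis using transitive xy C(3) by blast
  qed
  then show ?thesis using C(1,2) invariant_set_inverse unfolding chain_transitive_iff by blast
qed

lemma chain_reaches_inverse_stable_set:
  assumes "stable_set M f C" "chain_reaches M g p C"
  shows "p \<in> C"
proof -
  have "closed C" and stable: "\<And>\<delta>. \<delta> > 0 \<Longrightarrow> \<exists>e>0. \<forall>x\<in>C. \<forall>y. eps_chain M f e x y \<longrightarrow> y \<in> nbhd C \<delta>"
    using assms(1) unfolding stable_set_iff by auto
  have "p \<in> nbhd C \<delta>" if "\<delta> > 0" for \<delta>
  proof -
    obtain e where e: "e > 0" "\<forall>x\<in>C. \<forall>y. eps_chain M f e x y \<longrightarrow> y \<in> nbhd C \<delta>"
      using stable \<open>\<delta> > 0\<close> by blast
    obtain \<eta> where \<eta>: "\<eta> > 0" "\<And>S x y. S \<subseteq> M \<Longrightarrow> eps_chain S g \<eta> x y \<Longrightarrow> eps_chain S f e y x"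
      using eps_chain_reverse[OF e(1)] by blast
    obtain c where "c \<in> C" "eps_chain M g \<eta> p c"
      using assms(2) \<eta>(1) unfolding chain_reaches_def by blast
    then show ?thesis using \<eta>(2)[of M p c] e(2) by blast
  qed
  then have "p \<in> closure C" by (rule in_closure_if_in_all_nbhd)
  then show ?thesis using \<open>closed C\<close> by (simp add: closure_closed)
qed

lemma stable_set_inverse_of_reversible_core:
  assumes "reversible_core M f C"
  shows "stable_set M g C"
proof -
  have crh: "crh_attractor M f C" and core: "\<And>x. x \<in> M - C \<Longrightarrow> \<not> chain_reaches M f x C"
    using assms unfolding reversible_core_def dissipative_attractor_iff by auto
  have C: "closed C" "invariant_set M f C"
    using crh unfolding crh_attractor_def chain_transitive_def by blast+
  have "\<exists>\<eta>>0. \<forall>x\<in>C. \<forall>y. eps_chain M g \<eta> x y \<longrightarrow> y \<in> nbhd C \<delta>" if \<delta>: "\<delta> > 0" for \<delta>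
  proof -
    let ?K = "M - nbhd C \<delta>"
    have "\<exists>e>0. \<forall>y\<in>?K. \<forall>c\<in>C. \<not> eps_chain M f e y c"
    proof (rule eps_chain_avoids_uniformly)
      show "compact ?K" using closed_Diff[OF closed_M open_nbhd] by (rule compact_closed_subset) blast
      show "f ` C \<subseteq> C" using C(2) by (simp add: invariant_set_def)
      show "\<not> chain_reaches M f p C" if "p \<in> ?K" for p
        using that core subset_nbhd[OF \<delta>, of C] by blast
    qed blast
    then obtain e where e: "e > 0" "\<forall>y\<in>?K. \<forall>c\<in>C. \<not> eps_chain M f e y c" by blast
    obtain \<eta> where \<eta>: "\<eta> > 0" "\<And>S x y. S \<subseteq> M \<Longrightarrow> eps_chain S g \<eta> x y \<Longrightarrow> eps_chain S f e y x"
      using eps_chain_reverse[OF e(1)] by blast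
    have "y \<in> nbhd C \<delta>" if "x \<in> C" "eps_chain M g \<eta> x y" for x y
    proof (rule ccontr)
      assume "y \<notin> nbhd C \<delta>"
      moreover have "y \<in> M" using eps_chain_in[OF that(2)] by blast
      ultimately show False using e(2) \<eta>(2)[OF order_refl that(2)] that(1) by blast
    qed
    then show ?thesis using \<eta>(1) by blast
  qed
  then show ?thesis using C invariant_set_inverse unfolding stable_set_iff by blast
qed

lemma reversible_core_inverse:
  assumes "reversible_core M f C"
  shows "reversible_core M g C"
proof -
  have crh: "crh_attractor M f C" using assms by (simp add: reversible_core_def)
  then have "chain_transitive M g C" "C \<noteq> {}"
    using chain_transitive_inverse by (simp_all add: crh_attractor_def)
  moreover have "stable_set M g C" using assms by (rule stable_set_inverse_of_reversible_core)
  ultimately have "crh_attractor M g C" by (simp add: crh_attractor_def)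
  moreover have "\<not> chain_reaches M g x C" if "x \<in> M - C" for x
    using chain_reaches_inverse_stable_set[of C x] crh that by (auto simp: crh_attractor_def)
  ultimately show ?thesis unfolding reversible_core_def dissipative_attractor_iff by blast
qed

end

theorem theorem1:
  fixes M :: "'a::metric_space set" and f g :: "'a \<Rightarrow> 'a" and C :: "'a set"
  assumes "compact M" and "connected M"
    and "\<exists>D. countable D \<and> D \<subseteq> M \<and> M \<subseteq> closure D"
    and "homeomorphism M M f g"
    and "\<not> chain_transitive M f M"
    and "reversible_core M f C"
  shows "\<exists>A R :: nat \<Rightarrow> 'a set. \<exists>\<delta> :: nat \<Rightarrow> real.
           inj A \<and> inj R \<and>
           (\<forall>k. dissipative_attractor M f (A k)) \<and>
           (\<forall>k. dissipative_attractor M g (R k)) \<and>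
           \<delta> \<longlonglongrightarrow> 0 \<and>
           (\<forall>k. A k \<subseteq> nbhd C (\<delta> k) \<and> R k \<subseteq> nbhd C (\<delta> k))"
proof -
  interpret compact_dynamics M f g using assms(1,4) by unfold_locales
  interpret inverse: compact_dynamics M g f by (rule inverse_dynamics)
  have crh: "crh_attractor M f C" using assms(6) by (simp add: reversible_core_def)
  then have "C \<noteq> M" using assms(5) by (auto simp: crh_attractor_def)
  have "closed C" using crh by (simp add: crh_attractor_def chain_transitive_def)
  have "\<exists>A. inj A \<and> (\<forall>k. dissipative_attractor M f (A k) \<and> A k \<subseteq> nbhd C (inverse (real (Suc k))))"
    by (rule inj_seq_approaching[OF \<open>closed C\<close>])
      (auto intro: dissipative_attractor_compact dissipative_attractor_near[OF assms(2,6) \<open>C \<noteq> M\<close>]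
        dest: dissipative_attractor_nonempty)
  moreover have
    "\<exists>R. inj R \<and> (\<forall>k. dissipative_attractor M g (R k) \<and> R k \<subseteq> nbhd C (inverse (real (Suc k))))"
    by (rule inj_seq_approaching[OF \<open>closed C\<close>])
      (auto intro: dissipative_attractor_compact
        inverse.dissipative_attractor_near[OF assms(2) reversible_core_inverse[OF assms(6)] \<open>C \<noteq> M\<close>]
        dest: dissipative_attractor_nonempty)
  ultimately obtain A R where A: "inj A"
    "\<forall>k. dissipative_attractor M f (A k) \<and> A k \<subseteq> nbhd C (inverse (real (Suc k)))"
    and R: "inj R" "\<forall>k. dissipative_attractor M g (R k) \<and> R k \<subseteq> nbhd C (inverse (real (Suc k)))"
    by blast
  show ?thesis
    using A R LIMSEQ_inverse_real_of_nat
    by (intro exI[of _ A] exI[of _ R] exI[of _ "\<lambda>k. inverse (real (Suc k))"]) simp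
qed

end
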